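(* Let $\mathcal{X}$ be a projective, nonsingular, geometrically irreducible curve of genus $g$ over $\mathbb{F}_q$. Let $\mathcal{P}$ be a proper subset of $\mathcal{X}(\mathbb{F}_q)$ and $D=\sum_{P\in\mathcal{P}}P$. Let $G,H,J$ be divisors on $\mathcal{X}$ of degree at most $\deg(D)-1$ with $(\mathrm{supp}(G)\cup\mathrm{supp}(H)\cup\mathrm{supp}(J))\cap\mathrm{supp}(D)=\varnothing$. For each nonzero $f\in\mathscr{L}(J)$ let $H_f=H-(f)$. If \[ \mathscr{L}(\mathrm{lcm}(G,H_f)-D)\cap\big(\mathscr{L}(G)+\mathscr{L}(H_f)\big)=\{0\}\quad\text{for all nonzero }f\in\mathscr{L}(J), \] then $C(D,G)\cap C(D,H_f)=C(D,\gcd(G,H_f))$ (for every nonzero $f\in\mathscr{L}(J)$).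
   Context: $(f)$ is the principal divisor of a nonzero function $f$; $\gcd$ and $\mathrm{lcm}$ of divisors are taken coefficientwise (min and max of coefficients). $\mathscr{L}(E)=\{f\in\mathbb{F}_q(\mathcal{X})^*:(f)+E\ge0\}\cup\{0\}$, and $\mathscr{L}(G)+\mathscr{L}(H_f)$ is the sum of subspaces of the function field. Writing $D=P_1+\dots+P_n$, for a divisor $E$ such that every function in $\mathscr{L}(E)$ is regular at all points of $\mathrm{supp}(D)$, $C(D,E)=\{(f(P_1),\dots,f(P_n)):f\in\mathscr{L}(E)\}\subseteq\mathbb{F}_q^n$ (this applies to $G$, $H_f$ and $\gcd(G,H_f)$ here, since $\mathscr{L}(H_f)=f\mathscr{L}(H)$). *)

theory Defs
  imports "HOL-Computational_Algebra.Polynomial"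
begin

text \<open>
  The field of rational functions of the curve is the ambient type 'k (a field),
  and F_q is a finite subfield Fq of it.  Points of the curve correspond to places,
  represented by their normalized discrete valuations v : 'k \<Rightarrow> int
  (value on 0 conventionally 0, standing for +infinity).
\<close>

definition subfield :: "'k::field set \<Rightarrow> bool" where
  "subfield F \<longleftrightarrow> 0 \<in> F \<and> 1 \<in> F \<and> (\<forall>a\<in>F. \<forall>b\<in>F. a + b \<in> F \<and> a * b \<in> F)
     \<and> (\<forall>a\<in>F. - a \<in> F \<and> inverse a \<in> F)"

definition poly_over :: "'k::field set \<Rightarrow> 'k poly \<Rightarrow> bool" where
  "poly_over F p \<longleftrightarrow> (\<forall>i. coeff p i \<in> F)"

definition algebraic_over :: "'k::field set \<Rightarrow> 'k \<Rightarrow> bool" where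
  "algebraic_over F y \<longleftrightarrow> (\<exists>p. p \<noteq> 0 \<and> poly_over F p \<and> poly p y = 0)"

definition rat_fun_field :: "'k::field set \<Rightarrow> 'k \<Rightarrow> 'k set" where
  "rat_fun_field F x = {poly p x / poly r x | p r. poly_over F p \<and> poly_over F r \<and> poly r x \<noteq> 0}"

text \<open>'k is an algebraic function field of one variable over the finite field Fq with full
  constant field Fq (geometric irreducibility; separability is automatic since Fq is perfect).\<close>
definition function_field :: "'k::field set \<Rightarrow> bool" where
  "function_field Fq \<longleftrightarrow> subfield Fq \<and> finite Fq \<and>
     (\<exists>x. \<not> algebraic_over Fq x \<and>
        (\<exists>B. finite B \<and> (\<forall>y. \<exists>c. (\<forall>b\<in>B. c b \<in> rat_fun_field Fq x) \<and> y = (\<Sum>b\<in>B. c b * b)))) \<and>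
     (\<forall>y. algebraic_over Fq y \<longrightarrow> y \<in> Fq)"

definition place :: "'k::field set \<Rightarrow> ('k \<Rightarrow> int) \<Rightarrow> bool" where
  "place Fq v \<longleftrightarrow> v 0 = 0 \<and>
     (\<forall>x y. x \<noteq> 0 \<longrightarrow> y \<noteq> 0 \<longrightarrow> v (x * y) = v x + v y) \<and>
     (\<forall>x y. x \<noteq> 0 \<longrightarrow> y \<noteq> 0 \<longrightarrow> x + y \<noteq> 0 \<longrightarrow> v (x + y) \<ge> min (v x) (v y)) \<and>
     (\<forall>c\<in>Fq. c \<noteq> 0 \<longrightarrow> v c = 0) \<and>
     surj v"

definition places :: "'k::field set \<Rightarrow> ('k \<Rightarrow> int) set" where
  "places Fq = {v. place Fq v}"

text \<open>Valuation ring and "x is in the maximal ideal" (0 has valuation +infinity).\<close>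
definition regular_at :: "('k::field \<Rightarrow> int) \<Rightarrow> 'k \<Rightarrow> bool" where
  "regular_at v x \<longleftrightarrow> x = 0 \<or> v x \<ge> 0"

definition vanishes_at :: "('k::field \<Rightarrow> int) \<Rightarrow> 'k \<Rightarrow> bool" where
  "vanishes_at v x \<longleftrightarrow> x = 0 \<or> v x > 0"

definition residue_field :: "('k::field \<Rightarrow> int) \<Rightarrow> 'k set set" where
  "residue_field v = {x. regular_at v x} //
      {(x, y). regular_at v x \<and> regular_at v y \<and> vanishes_at v (x - y)}"

text \<open>Degree of a place: [residue field : Fq], i.e. card(residue field) = q^deg.\<close>
definition place_deg :: "'k::field set \<Rightarrow> ('k \<Rightarrow> int) \<Rightarrow> nat" where
  "place_deg Fq v = (THE n. card (residue_field v) = card Fq ^ n)"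

text \<open>Rational places (degree one places) = points of X(F_q).\<close>
definition rational_places :: "'k::field set \<Rightarrow> ('k \<Rightarrow> int) set" where
  "rational_places Fq = {v \<in> places Fq. place_deg Fq v = 1}"

definition eval_at :: "'k::field set \<Rightarrow> ('k \<Rightarrow> int) \<Rightarrow> 'k \<Rightarrow> 'k" where
  "eval_at Fq v f = (SOME c. c \<in> Fq \<and> vanishes_at v (f - c))"

type_synonym 'k divisor = "('k \<Rightarrow> int) \<Rightarrow> int"

definition is_divisor :: "'k::field set \<Rightarrow> 'k divisor \<Rightarrow> bool" where
  "is_divisor Fq E \<longleftrightarrow> finite {v. E v \<noteq> 0} \<and> {v. E v \<noteq> 0} \<subseteq> places Fq"

definition div_supp :: "'k::field divisor \<Rightarrow> ('k \<Rightarrow> int) set" where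
  "div_supp E = {v. E v \<noteq> 0}"

definition div_deg :: "'k::field set \<Rightarrow> 'k divisor \<Rightarrow> int" where
  "div_deg Fq E = (\<Sum>v\<in>div_supp E. E v * int (place_deg Fq v))"

definition principal_div :: "'k::field set \<Rightarrow> 'k \<Rightarrow> 'k divisor" where
  "principal_div Fq f = (\<lambda>v. if place Fq v then v f else 0)"

definition div_gcd :: "'k::field divisor \<Rightarrow> 'k divisor \<Rightarrow> 'k divisor" where
  "div_gcd E F = (\<lambda>v. min (E v) (F v))"

definition div_lcm :: "'k::field divisor \<Rightarrow> 'k divisor \<Rightarrow> 'k divisor" where
  "div_lcm E F = (\<lambda>v. max (E v) (F v))"

definition RR_space :: "'k::field set \<Rightarrow> 'k divisor \<Rightarrow> 'k set" where
  "RR_space Fq E = {f. f = 0 \<or> (\<forall>v. principal_div Fq f v + E v \<ge> 0)}"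

text \<open>Algebraic geometry code C(D,E), D = sum of the places in Pset; codewords are
  indexed by the places of Pset (the ordering P_1,...,P_n is immaterial here).\<close>
definition AG_code :: "'k::field set \<Rightarrow> ('k \<Rightarrow> int) set \<Rightarrow> 'k divisor \<Rightarrow> (('k \<Rightarrow> int) \<Rightarrow> 'k) set" where
  "AG_code Fq Pset E = {(\<lambda>P. if P \<in> Pset then eval_at Fq P f else 0) | f. f \<in> RR_space Fq E}"

definition sum_div :: "('k::field \<Rightarrow> int) set \<Rightarrow> 'k divisor" where
  "sum_div Pset = (\<lambda>v. if v \<in> Pset then 1 else 0)"

end

theory Submission
  imports Defs "HOL-Library.FuncSet"
begin

text \<open>
  Since \<open>L(gcd(E, F)) = L(E) \<inter> L(F)\<close>, the code of the gcd lies in both codes. Conversely, if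
  \<open>a \<in> L(G)\<close> and \<open>b \<in> L(H_f)\<close> give the same codeword, then \<open>a - b\<close> vanishes at every point
  of \<open>D\<close>, so it lies in \<open>L(lcm(G, H_f) - D) \<inter> (L(G) + L(H_f)) = {0}\<close>, whence
  \<open>a = b \<in> L(gcd(G, H_f))\<close>.

  The substance is in the step "equal values imply vanishing of the difference": a function regular
  at a rational place \<open>P\<close> is congruent modulo \<open>P\<close> to a constant. Choosing \<open>x\<close> transcendental
  with \<open>P x \<ge> 0\<close>, the residue field of \<open>Fq(x)\<close> at \<open>P\<close> is \<open>Fq[x]/(\<pi>)\<close>, which is finite, and the
  function field is finite over \<open>Fq(x)\<close>; hence the residue field at \<open>P\<close> is a finite-dimensional
  \<open>Fq\<close>-vector space, of cardinality \<open>q ^ deg P = q\<close>, i.e. it is \<open>Fq\<close> itself.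
\<close>

section \<open>Subfields and polynomials over them\<close>

lemma degree_cancel_leading_term:
  fixes p d :: "'a::field poly"
  assumes "d \<noteq> 0" "degree d \<le> degree p"
  defines "p' \<equiv> p - monom (lead_coeff p / lead_coeff d) (degree p - degree d) * d"
  shows "p' = 0 \<or> degree p' < degree p"
proof -
  have "coeff p' n = 0" if "degree p \<le> n" for n
  proof (cases "n = degree p")
    case True
    then show ?thesis using assms by (simp add: coeff_monom_mult)
  next
    case False
    then have "coeff p n = 0" "coeff d (n - (degree p - degree d)) = 0"
      using that assms(2) by (auto simp: coeff_eq_0)
    then show ?thesis by (simp add: p'_def coeff_monom_mult)
  qed
  then show ?thesis by (metis leading_coeff_0_iff not_le)
qed

context
  fixes F :: "'k::field set"
  assumes F: "subfield F"
begin

lemma subfield_zero: "0 \<in> F" and subfield_one: "1 \<in> F"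
  using F by (simp_all add: subfield_def)

lemma subfield_add: "a \<in> F \<Longrightarrow> b \<in> F \<Longrightarrow> a + b \<in> F"
  and subfield_mult: "a \<in> F \<Longrightarrow> b \<in> F \<Longrightarrow> a * b \<in> F"
  and subfield_uminus: "a \<in> F \<Longrightarrow> - a \<in> F"
  and subfield_inverse: "a \<in> F \<Longrightarrow> inverse a \<in> F"
  using F by (simp_all add: subfield_def)

lemma subfield_diff: "a \<in> F \<Longrightarrow> b \<in> F \<Longrightarrow> a - b \<in> F"
  using subfield_add[of a "- b"] subfield_uminus[of b] by simp

lemma subfield_divide: "a \<in> F \<Longrightarrow> b \<in> F \<Longrightarrow> a / b \<in> F"
  by (simp add: divide_inverse subfield_mult subfield_inverse)

lemma subfield_sum: "(\<And>i. i \<in> S \<Longrightarrow> f i \<in> F) \<Longrightarrow> sum f S \<in> F"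
  by (induction S rule: infinite_finite_induct) (auto simp: subfield_zero subfield_add)

lemma poly_over_zero [simp]: "poly_over F 0"
  by (simp add: poly_over_def subfield_zero)

lemma poly_over_const: "c \<in> F \<Longrightarrow> poly_over F [:c:]"
  by (auto simp: poly_over_def coeff_pCons subfield_zero split: nat.splits)

lemma poly_over_one [simp]: "poly_over F 1"
  using poly_over_const[OF subfield_one] by (simp add: one_pCons)

lemma poly_over_add: "poly_over F p \<Longrightarrow> poly_over F q \<Longrightarrow> poly_over F (p + q)"
  and poly_over_diff: "poly_over F p \<Longrightarrow> poly_over F q \<Longrightarrow> poly_over F (p - q)"
  and poly_over_uminus: "poly_over F p \<Longrightarrow> poly_over F (- p)"
  by (simp_all add: poly_over_def subfield_add subfield_diff subfield_uminus)

lemma poly_over_mult: "poly_over F p \<Longrightarrow> poly_over F q \<Longrightarrow> poly_over F (p * q)"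
  by (simp add: poly_over_def coeff_mult subfield_sum subfield_mult)

lemma poly_over_monom: "c \<in> F \<Longrightarrow> poly_over F (monom c n)"
  by (simp add: poly_over_def subfield_zero)

lemma poly_over_reflect_poly: "poly_over F p \<Longrightarrow> poly_over F (reflect_poly p)"
  by (simp add: poly_over_def coeff_reflect_poly subfield_zero)

lemma poly_over_div_mod_exists:
  assumes "poly_over F d" "d \<noteq> 0"
  shows "poly_over F p \<Longrightarrow>
    \<exists>q r. poly_over F q \<and> poly_over F r \<and> p = d * q + r \<and> (r = 0 \<or> degree r < degree d)"
proof (induction "degree p" arbitrary: p rule: less_induct)
  case less
  show ?case
  proof (cases "p = 0 \<or> degree p < degree d")
    case True
    then show ?thesis using less.prems by (intro exI[of _ 0] exI[of _ p]) auto
  next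
    case False
    then have deg_le: "degree d \<le> degree p" by simp
    define k where "k = degree p - degree d"
    define c where "c = lead_coeff p / lead_coeff d"
    define p' where "p' = p - monom c k * d"
    have c: "c \<in> F"
      unfolding c_def using less.prems assms by (intro subfield_divide) (auto simp: poly_over_def)
    have p': "poly_over F p'"
      unfolding p'_def using less.prems assms c by (intro poly_over_diff poly_over_mult poly_over_monom)
    obtain q r where qr: "poly_over F q" "poly_over F r" "p' = d * q + r" "r = 0 \<or> degree r < degree d"
    proof (cases "p' = 0")
      case True
      then show ?thesis using that[of 0 0] by simp
    next
      case False
      then have "degree p' < degree p"
        using degree_cancel_leading_term[OF assms(2) deg_le] unfolding p'_def c_def k_def by blast
      then show ?thesis using less.hyps p' that by blast
    qed
    have "p = d * (q + monom c k) + r" using qr(3) by (simp add: p'_def algebra_simps)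
    then show ?thesis
      using qr c by (intro exI[of _ "q + monom c k"] exI[of _ r]) (auto intro: poly_over_add poly_over_monom)
  qed
qed

end

lemma finite_poly_over_degree_less:
  assumes "finite F"
  shows "finite {p. poly_over F p \<and> degree p < n}"
proof -
  let ?Q = "{p. poly_over F p \<and> degree p < n}"
  have "inj_on (\<lambda>p. restrict (coeff p) {..<n}) ?Q"
  proof (rule inj_onI)
    fix p q assume "p \<in> ?Q" "q \<in> ?Q" and eq: "restrict (coeff p) {..<n} = restrict (coeff q) {..<n}"
    show "p = q"
    proof (rule poly_eqI)
      fix i show "coeff p i = coeff q i"
        using fun_cong[OF eq, of i] \<open>p \<in> ?Q\<close> \<open>q \<in> ?Q\<close>
        by (cases "i < n") (auto simp: coeff_eq_0)
    qed
  qed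
  moreover have "(\<lambda>p. restrict (coeff p) {..<n}) ` ?Q \<subseteq> (\<Pi>\<^sub>E i\<in>{..<n}. F)"
    by (auto simp: poly_over_def PiE_def extensional_def)
  moreover have "finite (\<Pi>\<^sub>E i\<in>{..<n}. F)" using assms by (simp add: finite_PiE)
  ultimately show ?thesis using finite_imageD finite_subset by blast
qed

lemma algebraic_over_of_mem:
  assumes "subfield F" "c \<in> F"
  shows "algebraic_over F c"
  unfolding algebraic_over_def using assms
  by (intro exI[of _ "[:-c, 1:]"])
    (auto simp: poly_over_def coeff_pCons subfield_zero subfield_one subfield_uminus split: nat.splits)


section \<open>Linear dependence over a subfield\<close>

lemma sum_pivot_elimination:
  fixes w :: "'i \<Rightarrow> 'b \<Rightarrow> 'k::field"
  assumes "finite I" "i0 \<notin> I"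
  shows "(\<Sum>i\<in>insert i0 I. (\<mu>(i0 := - ((\<Sum>i\<in>I. \<mu> i * w i b0) / w i0 b0))) i * w i b)
    = (\<Sum>i\<in>I. \<mu> i * (w i b - w i b0 / w i0 b0 * w i0 b))"
proof -
  let ?S = "\<Sum>i\<in>I. \<mu> i * w i b0"
  have "(\<Sum>i\<in>I. (\<mu>(i0 := - (?S / w i0 b0))) i * w i b) = (\<Sum>i\<in>I. \<mu> i * w i b)"
    using assms(2) by (intro sum.cong) auto
  then have "(\<Sum>i\<in>insert i0 I. (\<mu>(i0 := - (?S / w i0 b0))) i * w i b)
      = (\<Sum>i\<in>I. \<mu> i * w i b) - ?S * (w i0 b / w i0 b0)"
    using assms by (simp add: sum.insert)
  also have "\<dots> = (\<Sum>i\<in>I. \<mu> i * w i b - \<mu> i * w i b0 * (w i0 b / w i0 b0))"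
    by (simp only: sum_distrib_right sum_subtractf)
  also have "\<dots> = (\<Sum>i\<in>I. \<mu> i * (w i b - w i b0 / w i0 b0 * w i0 b))"
    by (simp add: algebra_simps)
  finally show ?thesis .
qed

lemma homogeneous_system_nontrivial_solution:
  assumes K: "subfield K" and "finite B"
  shows "finite I \<Longrightarrow> card B < card I \<Longrightarrow> (\<And>i b. i \<in> I \<Longrightarrow> b \<in> B \<Longrightarrow> w i b \<in> K) \<Longrightarrow>
    \<exists>\<mu>. (\<forall>i\<in>I. \<mu> i \<in> K) \<and> (\<exists>i\<in>I. \<mu> i \<noteq> 0) \<and> (\<forall>b\<in>B. (\<Sum>i\<in>I. \<mu> i * w i b) = 0)"
  using \<open>finite B\<close>
proof (induction B arbitrary: I w rule: finite_induct)
  case empty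
  then obtain i where "i \<in> I" by fastforce
  then show ?case by (intro exI[of _ "\<lambda>_. 1"]) (auto simp: subfield_one[OF K])
next
  case (insert b0 B)
  show ?case
  proof (cases "\<forall>i\<in>I. w i b0 = 0")
    case True
    then show ?thesis using insert.IH[of I w] insert.prems insert.hyps by auto
  next
    case False
    then obtain i0 where i0: "i0 \<in> I" "w i0 b0 \<noteq> 0" by auto
    define I' where "I' = I - {i0}"
    \<comment> \<open>Gaussian elimination of the column \<open>b0\<close> with pivot \<open>w i0 b0\<close>\<close>
    define w' where "w' i b = w i b - w i b0 / w i0 b0 * w i0 b" for i b
    have "finite I'" "card B < card I'"
      using insert i0 by (auto simp: I'_def)
    moreover have "w' i b \<in> K" if "i \<in> I'" "b \<in> B" for i b
      using insert.prems that i0 by (auto simp: w'_def I'_def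
          intro!: subfield_diff[OF K] subfield_mult[OF K] subfield_divide[OF K])
    ultimately obtain \<mu>' where \<mu>': "\<forall>i\<in>I'. \<mu>' i \<in> K" "\<exists>i\<in>I'. \<mu>' i \<noteq> 0"
        "\<forall>b\<in>B. (\<Sum>i\<in>I'. \<mu>' i * w' i b) = 0"
      using insert.IH by blast
    define S where "S = (\<Sum>i\<in>I'. \<mu>' i * w i b0)"
    define \<mu> where "\<mu> = \<mu>'(i0 := - (S / w i0 b0))"
    have I: "I = insert i0 I'" "i0 \<notin> I'" "finite I'"
      using i0 insert.prems by (auto simp: I'_def)
    have solution: "(\<Sum>i\<in>I. \<mu> i * w i b) = (\<Sum>i\<in>I'. \<mu>' i * w' i b)" for b
      unfolding I(1) \<mu>_def S_def w'_def by (rule sum_pivot_elimination[OF I(3) I(2)])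
    have "S \<in> K"
      unfolding S_def using \<mu>'(1) insert.prems(3)
      by (intro subfield_sum[OF K] subfield_mult[OF K]) (auto simp: I'_def)
    then have "\<mu> i0 \<in> K"
      using insert.prems(3) i0(1) by (simp add: \<mu>_def subfield_uminus[OF K] subfield_divide[OF K])
    then have "\<forall>i\<in>I. \<mu> i \<in> K" using \<mu>'(1) by (auto simp: \<mu>_def I'_def)
    moreover have "\<exists>i\<in>I. \<mu> i \<noteq> 0" using \<mu>'(2) by (auto simp: \<mu>_def I'_def)
    moreover have "(\<Sum>i\<in>I'. \<mu>' i * w' i b0) = 0" using i0(2) by (simp add: w'_def)
    then have "\<forall>b\<in>insert b0 B. (\<Sum>i\<in>I. \<mu> i * w i b) = 0"
      unfolding solution using \<mu>'(3) by blast
    ultimately show ?thesis by blast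
  qed
qed

definition spans :: "'k::field set \<Rightarrow> 'k set \<Rightarrow> bool" where
  "spans K B \<longleftrightarrow> (\<forall>y. \<exists>c. (\<forall>b\<in>B. c b \<in> K) \<and> y = (\<Sum>b\<in>B. c b * b))"

lemma spans_dependent:
  assumes K: "subfield K" and B: "finite B" "spans K B" and m: "card B < m"
  shows "\<exists>\<mu>. (\<forall>i<m. \<mu> i \<in> K) \<and> (\<exists>i<m. \<mu> i \<noteq> 0) \<and> (\<Sum>i<m. \<mu> i * y i) = 0"
proof -
  obtain c where c: "\<And>z. (\<forall>b\<in>B. c z b \<in> K) \<and> z = (\<Sum>b\<in>B. c z b * b)"
    using B(2) unfolding spans_def by metis
  obtain \<mu> where \<mu>: "\<forall>i<m. \<mu> i \<in> K" "\<exists>i<m. \<mu> i \<noteq> 0"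
      "\<forall>b\<in>B. (\<Sum>i<m. \<mu> i * c (y i) b) = 0"
    using homogeneous_system_nontrivial_solution[OF K B(1), of "{..<m}" "\<lambda>i b. c (y i) b"] m c
    by auto
  have "(\<Sum>i<m. \<mu> i * y i) = (\<Sum>i<m. \<mu> i * (\<Sum>b\<in>B. c (y i) b * b))"
    using c by metis
  also have "\<dots> = (\<Sum>b\<in>B. (\<Sum>i<m. \<mu> i * c (y i) b) * b)"
    by (simp add: sum_distrib_left sum_distrib_right sum.swap[of _ B] mult.assoc)
  also have "\<dots> = 0" using \<mu>(3) by simp
  finally show ?thesis using \<mu> by auto
qed

section \<open>The rational function field\<close>

lemma rat_fun_fieldE:
  assumes "a \<in> rat_fun_field F x"
  obtains p r where "poly_over F p" "poly_over F r" "poly r x \<noteq> 0" "a = poly p x / poly r x"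
  using assms unfolding rat_fun_field_def by blast

lemma rat_fun_field_frac:
  "poly_over F p \<Longrightarrow> poly_over F r \<Longrightarrow> poly r x \<noteq> 0 \<Longrightarrow> poly p x / poly r x \<in> rat_fun_field F x"
  unfolding rat_fun_field_def by blast

lemma rat_fun_field_const: "subfield F \<Longrightarrow> c \<in> F \<Longrightarrow> c \<in> rat_fun_field F x"
  using rat_fun_field_frac[of F "[:c:]" 1 x] by (simp add: poly_over_const)

lemma subfield_rat_fun_field:
  assumes F: "subfield F"
  shows "subfield (rat_fun_field F x)"
proof -
  let ?R = "rat_fun_field F x"
  have add: "a + b \<in> ?R" and mult: "a * b \<in> ?R" if "a \<in> ?R" "b \<in> ?R" for a b
  proof -
    obtain p r where a: "poly_over F p" "poly_over F r" "poly r x \<noteq> 0" "a = poly p x / poly r x"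
      using \<open>a \<in> ?R\<close> by (rule rat_fun_fieldE)
    obtain p' r' where b: "poly_over F p'" "poly_over F r'" "poly r' x \<noteq> 0" "b = poly p' x / poly r' x"
      using \<open>b \<in> ?R\<close> by (rule rat_fun_fieldE)
    have "poly (p * r' + p' * r) x / poly (r * r') x \<in> ?R"
      using a b F by (intro rat_fun_field_frac poly_over_add poly_over_mult) auto
    moreover have "a + b = poly (p * r' + p' * r) x / poly (r * r') x"
      using a b by (simp add: add_frac_eq)
    ultimately show "a + b \<in> ?R" by simp
    have "poly (p * p') x / poly (r * r') x \<in> ?R"
      using a b F by (intro rat_fun_field_frac poly_over_mult) auto
    moreover have "a * b = poly (p * p') x / poly (r * r') x"
      using a b by simp
    ultimately show "a * b \<in> ?R" by simp
  qed
  have uminus: "- a \<in> ?R" and inverse: "inverse a \<in> ?R" if "a \<in> ?R" for a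
  proof -
    obtain p r where a: "poly_over F p" "poly_over F r" "poly r x \<noteq> 0" "a = poly p x / poly r x"
      using \<open>a \<in> ?R\<close> by (rule rat_fun_fieldE)
    have "poly (- p) x / poly r x \<in> ?R"
      using a F by (intro rat_fun_field_frac poly_over_uminus) auto
    then show "- a \<in> ?R" using a by simp
    show "inverse a \<in> ?R"
    proof (cases "poly p x = 0")
      case True
      then show ?thesis using a rat_fun_field_const[OF F subfield_zero[OF F]] by simp
    next
      case False
      then show ?thesis using a by (auto intro!: rat_fun_field_frac)
    qed
  qed
  have "0 \<in> ?R" "1 \<in> ?R"
    using rat_fun_field_const[OF F subfield_zero[OF F]] rat_fun_field_const[OF F subfield_one[OF F]] .
  then show ?thesis
    unfolding subfield_def by (intro conjI ballI add mult uminus inverse)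
qed

lemma rat_fun_field_subset_inverse:
  assumes F: "subfield F" and x: "x \<noteq> 0"
  shows "rat_fun_field F x \<subseteq> rat_fun_field F (inverse x)"
proof
  fix a assume "a \<in> rat_fun_field F x"
  then obtain p r where a: "poly_over F p" "poly_over F r" "poly r x \<noteq> 0" "a = poly p x / poly r x"
    by (rule rat_fun_fieldE)
  let ?y = "inverse x"
  have y: "?y \<noteq> 0" using x by simp
  \<comment> \<open>\<open>(reflect_poly p)(1/x) = p(x) / x ^ degree p\<close>; the two powers of \<open>1/x\<close> cancel in the quotient\<close>
  define P where "P = reflect_poly p * monom 1 (degree r)"
  define R where "R = reflect_poly r * monom 1 (degree p)"
  have P: "poly P ?y = (?y ^ degree p * ?y ^ degree r) * poly p x"
    unfolding P_def using poly_reflect_poly_nz[OF y, of p] by (simp add: poly_monom ac_simps)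
  have R: "poly R ?y = (?y ^ degree p * ?y ^ degree r) * poly r x"
    unfolding R_def using poly_reflect_poly_nz[OF y, of r] by (simp add: poly_monom ac_simps)
  have "a = poly P ?y / poly R ?y"
    unfolding P R a(4) using y by simp
  moreover have "poly_over F P" "poly_over F R"
    unfolding P_def R_def using a F by (auto intro!: poly_over_mult poly_over_reflect_poly poly_over_monom subfield_one)
  moreover have "poly R ?y \<noteq> 0" using R a y by simp
  ultimately show "a \<in> rat_fun_field F ?y" by (auto intro!: rat_fun_field_frac)
qed

section \<open>Valuation of a place\<close>

locale place_valuation =
  fixes Fq :: "'k::field set" and v :: "'k \<Rightarrow> int"
  assumes subfield: "subfield Fq" and place: "place Fq v"
begin

lemma val_zero [simp]: "v 0 = 0"
  and val_mult: "x \<noteq> 0 \<Longrightarrow> y \<noteq> 0 \<Longrightarrow> v (x * y) = v x + v y"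
  and val_add_ge_min: "x \<noteq> 0 \<Longrightarrow> y \<noteq> 0 \<Longrightarrow> x + y \<noteq> 0 \<Longrightarrow> min (v x) (v y) \<le> v (x + y)"
  and val_const: "c \<in> Fq \<Longrightarrow> c \<noteq> 0 \<Longrightarrow> v c = 0"
  and surj_val: "surj v"
  using place by (simp_all add: place_def)

lemma val_one [simp]: "v 1 = 0"
  using val_mult[of 1 1] by simp

lemma val_uminus [simp]: "v (- x) = v x"
proof (cases "x = 0")
  case False
  have "v (-1) = 0" using val_mult[of "-1" "-1"] by simp
  then show ?thesis using val_mult[of "-1" x] False by simp
qed simp

lemma val_inverse: "v (inverse x) = - v x"
  by (cases "x = 0") (use val_mult[of x "inverse x"] in auto)

lemma val_divide: "x \<noteq> 0 \<Longrightarrow> y \<noteq> 0 \<Longrightarrow> v (x / y) = v x - v y"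
  by (simp add: divide_inverse val_mult val_inverse)

lemma val_power: "x \<noteq> 0 \<Longrightarrow> v (x ^ n) = int n * v x"
  by (induction n) (auto simp: val_mult algebra_simps)

lemma val_add_eq_left:
  assumes "x \<noteq> 0" "y \<noteq> 0" "v x < v y"
  shows "x + y \<noteq> 0" "v (x + y) = v x"
proof -
  show sum: "x + y \<noteq> 0"
    using assms by (metis add_eq_0_iff less_irrefl val_uminus)
  have "v x \<le> v (x + y)" using val_add_ge_min[OF assms(1,2) sum] assms(3) by simp
  moreover have "min (v (x + y)) (v (- y)) \<le> v x"
    using val_add_ge_min[of "x + y" "- y"] sum assms by simp
  ultimately show "v (x + y) = v x" using assms(3) by auto
qed

lemma val_sum_distinct:
  assumes "finite S" "S \<noteq> {}" "\<And>i. i \<in> S \<Longrightarrow> f i \<noteq> 0" "inj_on (\<lambda>i. v (f i)) S"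
  shows "sum f S \<noteq> 0 \<and> v (sum f S) = (MIN i\<in>S. v (f i))"
  using assms
proof (induction S rule: finite_ne_induct)
  case (insert i S)
  have IH: "sum f S \<noteq> 0" "v (sum f S) = (MIN i\<in>S. v (f i))"
    using insert by (auto intro: inj_on_subset)
  obtain j where j: "j \<in> S" "(MIN i\<in>S. v (f i)) = v (f j)"
    using Min_in[of "(\<lambda>i. v (f i)) ` S"] insert.hyps
    by (metis (no_types, lifting) finite_imageI image_iff image_is_empty)
  have "v (f i) \<noteq> v (f j)" using insert j by (metis inj_on_contraD insertCI)
  then have ne: "v (f i) \<noteq> v (sum f S)" using IH j by simp
  have "f i + sum f S \<noteq> 0 \<and> v (f i + sum f S) = min (v (f i)) (v (sum f S))"
  proof (cases "v (f i) < v (sum f S)")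
    case True
    then show ?thesis using val_add_eq_left[of "f i" "sum f S"] IH insert.prems by auto
  next
    case False
    then have "v (sum f S) < v (f i)" using ne by simp
    then show ?thesis using val_add_eq_left[of "sum f S" "f i"] IH insert.prems by (auto simp: add.commute)
  qed
  then show ?case using insert IH by simp
qed simp

lemma regular_at_zero [simp]: "regular_at v 0"
  and vanishes_at_zero [simp]: "vanishes_at v 0"
  and not_vanishes_at_one [simp]: "\<not> vanishes_at v 1"
  by (simp_all add: regular_at_def vanishes_at_def)

lemma regular_at_add: "regular_at v a \<Longrightarrow> regular_at v b \<Longrightarrow> regular_at v (a + b)"
  and vanishes_at_add: "vanishes_at v a \<Longrightarrow> vanishes_at v b \<Longrightarrow> vanishes_at v (a + b)"
  unfolding regular_at_def vanishes_at_def
  by (cases "a = 0"; cases "b = 0"; cases "a + b = 0"; use val_add_ge_min[of a b] in force)+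

lemma regular_at_uminus: "regular_at v a \<Longrightarrow> regular_at v (- a)"
  and vanishes_at_uminus: "vanishes_at v a \<Longrightarrow> vanishes_at v (- a)"
  by (auto simp: regular_at_def vanishes_at_def)

lemma vanishes_at_diff: "vanishes_at v a \<Longrightarrow> vanishes_at v b \<Longrightarrow> vanishes_at v (a - b)"
  using vanishes_at_add[of a "- b"] vanishes_at_uminus[of b] by simp

lemma regular_at_mult: "regular_at v a \<Longrightarrow> regular_at v b \<Longrightarrow> regular_at v (a * b)"
  and vanishes_at_mult_left: "regular_at v a \<Longrightarrow> vanishes_at v b \<Longrightarrow> vanishes_at v (a * b)"
  and vanishes_at_mult_right: "vanishes_at v a \<Longrightarrow> regular_at v b \<Longrightarrow> vanishes_at v (a * b)"
  unfolding regular_at_def vanishes_at_def by (cases "a = 0"; cases "b = 0"; simp add: val_mult)+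

lemma regular_at_sum: "(\<And>i. i \<in> S \<Longrightarrow> regular_at v (f i)) \<Longrightarrow> regular_at v (sum f S)"
  and vanishes_at_sum: "(\<And>i. i \<in> S \<Longrightarrow> vanishes_at v (f i)) \<Longrightarrow> vanishes_at v (sum f S)"
  by (induction S rule: infinite_finite_induct) (auto intro: regular_at_add vanishes_at_add)

lemma regular_at_const: "c \<in> Fq \<Longrightarrow> regular_at v c"
  unfolding regular_at_def by (cases "c = 0") (auto simp: val_const)

lemma const_vanishes_at_iff: "c \<in> Fq \<Longrightarrow> vanishes_at v c \<longleftrightarrow> c = 0"
  unfolding vanishes_at_def by (cases "c = 0") (auto simp: val_const)

lemma vanishes_at_diff_trans:
  "vanishes_at v (a - b) \<Longrightarrow> vanishes_at v (b - c) \<Longrightarrow> vanishes_at v (a - c)"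
  using vanishes_at_add[of "a - b" "b - c"] by simp

lemma unit_at:
  assumes "regular_at v a" "\<not> vanishes_at v a"
  shows "a \<noteq> 0" "v a = 0" "regular_at v (inverse a)" "\<not> vanishes_at v (inverse a)"
  using assms by (auto simp: regular_at_def vanishes_at_def val_inverse)

definition residue_reps :: "'k set \<Rightarrow> 'k set \<Rightarrow> bool" where
  "residue_reps K A \<longleftrightarrow>
     K \<subseteq> {z. regular_at v z} \<and> (\<forall>a\<in>A. regular_at v a \<longrightarrow> (\<exists>\<kappa>\<in>K. vanishes_at v (a - \<kappa>)))"

end

section \<open>Residues of the rational function field\<close>

locale place_regular_transcendental = place_valuation +
  fixes x and B
  assumes transcendental: "\<not> algebraic_over Fq x" and regular_x: "regular_at v x"
    and finite_Fq: "finite Fq" and finite_B: "finite B" and spans_B: "spans (rat_fun_field Fq x) B"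
begin

lemma regular_at_poly: "poly_over Fq p \<Longrightarrow> regular_at v (poly p x)"
proof (induction p)
  case (pCons a p)
  then have "a \<in> Fq" "poly_over Fq p"
    by (auto simp: poly_over_def coeff_pCons split: nat.splits)
  then show ?case
    using pCons.IH regular_x regular_at_const by (simp add: regular_at_add regular_at_mult)
qed simp

lemma poly_nonzero: "poly_over Fq p \<Longrightarrow> p \<noteq> 0 \<Longrightarrow> poly p x \<noteq> 0"
  using transcendental by (auto simp: algebraic_over_def)

lemma val_rat_fun_field_eq_zero:
  assumes none: "\<forall>p. poly_over Fq p \<and> p \<noteq> 0 \<longrightarrow> \<not> vanishes_at v (poly p x)"
    and a: "a \<in> rat_fun_field Fq x" "a \<noteq> 0"
  shows "v a = 0"
proof -
  have val_poly: "v (poly p x) = 0" if "poly_over Fq p" "p \<noteq> 0" for p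
    using that none regular_at_poly[OF that(1)] poly_nonzero[OF that]
    by (auto simp: regular_at_def vanishes_at_def)
  obtain p r where "poly_over Fq p" "poly_over Fq r" "poly r x \<noteq> 0" "a = poly p x / poly r x"
    using a(1) by (rule rat_fun_fieldE)
  moreover from this have "p \<noteq> 0" "r \<noteq> 0" using a(2) by auto
  ultimately show ?thesis using val_poly by (simp add: val_divide poly_nonzero)
qed

lemma exists_poly_vanishing: "\<exists>p. poly_over Fq p \<and> p \<noteq> 0 \<and> vanishes_at v (poly p x)"
proof (rule ccontr)
  assume "\<not> ?thesis"
  then have val_rat_fun: "v a = 0" if "a \<in> rat_fun_field Fq x" "a \<noteq> 0" for a
    using val_rat_fun_field_eq_zero that by blast
  \<comment> \<open>then the powers of an element of valuation \<open>-1\<close> cannot be dependent over \<open>Fq(x)\<close>\<close>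
  obtain y where y: "v y = -1" using surj_val by (metis surjD)
  then have "y \<noteq> 0" by auto
  define m where "m = Suc (card B)"
  obtain \<mu> where \<mu>: "\<forall>i<m. \<mu> i \<in> rat_fun_field Fq x" "\<exists>i<m. \<mu> i \<noteq> 0" "(\<Sum>i<m. \<mu> i * y ^ i) = 0"
    using spans_dependent[OF subfield_rat_fun_field[OF subfield] finite_B spans_B, of m "\<lambda>i. y ^ i"]
    by (auto simp: m_def)
  define S where "S = {i. i < m \<and> \<mu> i \<noteq> 0}"
  have "finite S" "S \<noteq> {}" using \<mu>(2) by (auto simp: S_def)
  moreover have "v (\<mu> i * y ^ i) = - int i" if "i \<in> S" for i
    using that val_rat_fun[of "\<mu> i"] \<mu>(1) y \<open>y \<noteq> 0\<close> by (simp add: S_def val_mult val_power)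
  then have "inj_on (\<lambda>i. v (\<mu> i * y ^ i)) S" by (intro inj_onI) simp
  ultimately have "(\<Sum>i\<in>S. \<mu> i * y ^ i) \<noteq> 0"
    using val_sum_distinct[of S "\<lambda>i. \<mu> i * y ^ i"] \<open>y \<noteq> 0\<close> by (auto simp: S_def)
  moreover have "(\<Sum>i\<in>S. \<mu> i * y ^ i) = (\<Sum>i<m. \<mu> i * y ^ i)"
    by (rule sum.mono_neutral_left) (auto simp: S_def)
  ultimately show False using \<mu>(3) by simp
qed

end

text \<open>\<open>\<pi>\<close> generates the prime ideal of the polynomials in \<open>Fq[x]\<close> vanishing at \<open>v\<close>.\<close>

locale prime_poly_at = place_regular_transcendental +
  fixes \<pi>
  assumes poly_over_\<pi>: "poly_over Fq \<pi>" and \<pi>_nonzero: "\<pi> \<noteq> 0"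
    and vanishes_\<pi>: "vanishes_at v (poly \<pi> x)"
    and degree_\<pi>_minimal: "\<And>q. poly_over Fq q \<Longrightarrow> q \<noteq> 0 \<Longrightarrow> vanishes_at v (poly q x) \<Longrightarrow> degree \<pi> \<le> degree q"
begin

definition reduced_polys where
  "reduced_polys = {q. poly_over Fq q \<and> degree q < degree \<pi>}"

lemma finite_reduced_polys: "finite reduced_polys"
  unfolding reduced_polys_def by (rule finite_poly_over_degree_less[OF finite_Fq])

lemma val_\<pi>_pos: "poly \<pi> x \<noteq> 0" "0 < v (poly \<pi> x)"
  using vanishes_\<pi> poly_nonzero[OF poly_over_\<pi> \<pi>_nonzero] by (auto simp: vanishes_at_def)

lemma degree_\<pi>_pos: "0 < degree \<pi>"
proof (rule ccontr)
  assume "\<not> 0 < degree \<pi>"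
  then have \<pi>: "\<pi> = [:coeff \<pi> 0:]" by (metis degree_0_id neq0_conv)
  then have "poly \<pi> x = coeff \<pi> 0" by (metis poly_pCons poly_0 mult_zero_right add_0_right)
  moreover have "coeff \<pi> 0 \<in> Fq" using poly_over_\<pi> by (simp add: poly_over_def)
  ultimately show False
    using vanishes_\<pi> \<pi>_nonzero \<pi> const_vanishes_at_iff[of "coeff \<pi> 0"] by (metis pCons_0_0)
qed

lemma reduced_polys_not_vanishing:
  "q \<in> reduced_polys \<Longrightarrow> q \<noteq> 0 \<Longrightarrow> \<not> vanishes_at v (poly q x)"
  using degree_\<pi>_minimal[of q] by (auto simp: reduced_polys_def)

lemma poly_mod_\<pi>:
  assumes "poly_over Fq p"
  obtains q u where "poly_over Fq q" "u \<in> reduced_polys" "p = \<pi> * q + u"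
proof -
  obtain q u where qu: "poly_over Fq q" "poly_over Fq u" "p = \<pi> * q + u" "u = 0 \<or> degree u < degree \<pi>"
    using poly_over_div_mod_exists[OF subfield poly_over_\<pi> \<pi>_nonzero assms] by blast
  moreover have "u \<in> reduced_polys" using qu(2,4) degree_\<pi>_pos by (auto simp: reduced_polys_def)
  ultimately show ?thesis using that by blast
qed

lemma poly_congruent_reduced:
  assumes "poly_over Fq p"
  obtains u where "u \<in> reduced_polys" "vanishes_at v (poly p x - poly u x)"
proof -
  obtain q u where qu: "poly_over Fq q" "u \<in> reduced_polys" "p = \<pi> * q + u"
    using poly_mod_\<pi>[OF assms] .
  have "vanishes_at v (poly \<pi> x * poly q x)"
    using vanishes_\<pi> regular_at_poly[OF qu(1)] by (rule vanishes_at_mult_right)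
  then show ?thesis using that qu by simp
qed

lemma poly_factor_\<pi>_power:
  "poly_over Fq r \<Longrightarrow> r \<noteq> 0 \<Longrightarrow>
    \<exists>k r'. poly_over Fq r' \<and> r = \<pi> ^ k * r' \<and> \<not> vanishes_at v (poly r' x)"
proof (induction "degree r" arbitrary: r rule: less_induct)
  case less
  show ?case
  proof (cases "vanishes_at v (poly r x)")
    case False
    then show ?thesis using less.prems by (intro exI[of _ 0] exI[of _ r]) auto
  next
    case True
    obtain q u where qu: "poly_over Fq q" "u \<in> reduced_polys" "r = \<pi> * q + u"
      using poly_mod_\<pi>[OF less.prems(1)] .
    have "poly u x = poly r x - poly \<pi> x * poly q x" using qu(3) by simp
    then have "vanishes_at v (poly u x)"
      using True vanishes_\<pi> regular_at_poly[OF qu(1)] by (auto intro!: vanishes_at_diff vanishes_at_mult_right)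
    then have r: "r = \<pi> * q" using qu reduced_polys_not_vanishing by auto
    then have "q \<noteq> 0" using less.prems by auto
    then have "degree q < degree r" using r \<pi>_nonzero degree_\<pi>_pos by (simp add: degree_mult_eq)
    then obtain k r' where "poly_over Fq r'" "q = \<pi> ^ k * r'" "\<not> vanishes_at v (poly r' x)"
      using less.hyps[of q] qu(1) \<open>q \<noteq> 0\<close> by blast
    then show ?thesis using r by (intro exI[of _ "Suc k"] exI[of _ r']) (auto simp: mult.assoc)
  qed
qed

text \<open>The residues of \<open>Fq[x]\<close> modulo \<open>\<pi>\<close> form a finite integral domain, hence a field.\<close>

lemma poly_inverse_mod_\<pi>:
  assumes r: "poly_over Fq r" "\<not> vanishes_at v (poly r x)"
  obtains s where "poly_over Fq s" "vanishes_at v (poly r x * poly s x - 1)"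
proof -
  have val_r: "v (poly r x) = 0" "poly r x \<noteq> 0"
    using unit_at[OF regular_at_poly[OF r(1)] r(2)] by auto
  define \<phi> where "\<phi> s = (SOME u. u \<in> reduced_polys \<and> vanishes_at v (poly (r * s) x - poly u x))" for s
  have \<phi>: "\<phi> s \<in> reduced_polys \<and> vanishes_at v (poly (r * s) x - poly (\<phi> s) x)"
    if "s \<in> reduced_polys" for s
  proof -
    have "poly_over Fq (r * s)"
      using that r(1) by (auto simp: reduced_polys_def intro: poly_over_mult[OF subfield])
    then show ?thesis
      unfolding \<phi>_def by (rule poly_congruent_reduced) (metis (no_types, lifting) someI_ex)
  qed
  have "inj_on \<phi> reduced_polys"
  proof (rule inj_onI)
    fix s1 s2 assume s: "s1 \<in> reduced_polys" "s2 \<in> reduced_polys" "\<phi> s1 = \<phi> s2"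
    have "vanishes_at v (poly (r * s1) x - poly (r * s2) x)"
      using \<phi>[OF s(1)] \<phi>[OF s(2)] s(3)
      by (metis minus_diff_eq vanishes_at_diff_trans vanishes_at_uminus)
    then have "vanishes_at v (poly r x * poly (s1 - s2) x)" by (simp add: algebra_simps)
    then have "vanishes_at v (poly (s1 - s2) x)"
      using val_r by (cases "poly (s1 - s2) x = 0") (auto simp: vanishes_at_def val_mult)
    moreover have "s1 - s2 \<in> reduced_polys"
      using s by (auto simp: reduced_polys_def intro: poly_over_diff[OF subfield]
          degree_diff_le_max[THEN le_less_trans])
    ultimately show "s1 = s2" using reduced_polys_not_vanishing by force
  qed
  moreover have "\<phi> ` reduced_polys \<subseteq> reduced_polys" using \<phi> by auto
  ultimately have "\<phi> ` reduced_polys = reduced_polys"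
    using endo_inj_surj finite_reduced_polys by blast
  moreover have "1 \<in> reduced_polys"
    using degree_\<pi>_pos by (simp add: reduced_polys_def subfield)
  ultimately obtain s where s: "s \<in> reduced_polys" "\<phi> s = 1" by (metis imageE)
  then show ?thesis using that \<phi>[OF s(1)] by (auto simp: reduced_polys_def)
qed

lemma unit_quotient_congruent_reduced:
  assumes p: "poly_over Fq p" and r: "poly_over Fq r" "\<not> vanishes_at v (poly r x)"
  obtains u where "u \<in> reduced_polys" "vanishes_at v (poly p x / poly r x - poly u x)"
proof -
  obtain s where s: "poly_over Fq s" "vanishes_at v (poly r x * poly s x - 1)"
    using poly_inverse_mod_\<pi>[OF r] .
  obtain u where u: "u \<in> reduced_polys" "vanishes_at v (poly (p * s) x - poly u x)"
    using poly_congruent_reduced[of "p * s"] p s(1) poly_over_mult[OF subfield] by blast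
  have unit: "regular_at v (inverse (poly r x))" "poly r x \<noteq> 0"
    using unit_at[OF regular_at_poly[OF r(1)] r(2)] by auto
  have "poly p x / poly r x - poly (p * s) x
      = - (poly p x * inverse (poly r x) * (poly r x * poly s x - 1))"
    using unit(2) by (simp add: field_simps)
  moreover have "vanishes_at v (poly p x * inverse (poly r x) * (poly r x * poly s x - 1))"
    using s(2) regular_at_poly[OF p] unit(1) by (intro vanishes_at_mult_left regular_at_mult)
  ultimately have "vanishes_at v (poly p x / poly r x - poly (p * s) x)"
    by (simp add: vanishes_at_uminus)
  then show ?thesis using that u vanishes_at_diff_trans by blast
qed

lemma rat_fun_field_factor_\<pi>:
  assumes a: "a \<in> rat_fun_field Fq x" "a \<noteq> 0"
  obtains j k p r where "poly_over Fq p" "\<not> vanishes_at v (poly p x)"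
    "poly_over Fq r" "\<not> vanishes_at v (poly r x)" "a = poly \<pi> x ^ j / poly \<pi> x ^ k * (poly p x / poly r x)"
proof -
  obtain p r where pr: "poly_over Fq p" "poly_over Fq r" "poly r x \<noteq> 0" "a = poly p x / poly r x"
    using a(1) by (rule rat_fun_fieldE)
  then have "p \<noteq> 0" "r \<noteq> 0" using a(2) by auto
  obtain j p' where p': "poly_over Fq p'" "p = \<pi> ^ j * p'" "\<not> vanishes_at v (poly p' x)"
    using poly_factor_\<pi>_power[OF pr(1) \<open>p \<noteq> 0\<close>] by blast
  obtain k r' where r': "poly_over Fq r'" "r = \<pi> ^ k * r'" "\<not> vanishes_at v (poly r' x)"
    using poly_factor_\<pi>_power[OF pr(2) \<open>r \<noteq> 0\<close>] by blast
  have "a = poly \<pi> x ^ j / poly \<pi> x ^ k * (poly p' x / poly r' x)"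
    using pr(4) p'(2) r'(2) by simp
  then show ?thesis using that p' r' by blast
qed

lemma residue_reps_rat_fun_field:
  "residue_reps ((\<lambda>q. poly q x) ` reduced_polys) (rat_fun_field Fq x)"
  unfolding residue_reps_def
proof (intro conjI ballI impI)
  show "(\<lambda>q. poly q x) ` reduced_polys \<subseteq> {z. regular_at v z}"
    using regular_at_poly by (auto simp: reduced_polys_def)
next
  fix a assume a: "a \<in> rat_fun_field Fq x" "regular_at v a"
  have zero: "0 \<in> (\<lambda>q. poly q x) ` reduced_polys"
    using degree_\<pi>_pos by (auto simp: reduced_polys_def subfield intro!: image_eqI[of 0 _ 0])
  show "\<exists>\<kappa>\<in>(\<lambda>q. poly q x) ` reduced_polys. vanishes_at v (a - \<kappa>)"
  proof (cases "a = 0")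
    case True
    then show ?thesis using zero by (intro bexI[of _ 0]) auto
  next
    case False
    obtain j k p r where p: "poly_over Fq p" "\<not> vanishes_at v (poly p x)"
      and r: "poly_over Fq r" "\<not> vanishes_at v (poly r x)"
      and a_eq: "a = poly \<pi> x ^ j / poly \<pi> x ^ k * (poly p x / poly r x)"
      using rat_fun_field_factor_\<pi>[OF a(1) False] .
    have "v (poly p x) = 0" "poly p x \<noteq> 0" "v (poly r x) = 0" "poly r x \<noteq> 0"
      using unit_at[OF regular_at_poly[OF p(1)] p(2)] unit_at[OF regular_at_poly[OF r(1)] r(2)] by auto
    then have val_a: "v a = (int j - int k) * v (poly \<pi> x)"
      using a_eq val_\<pi>_pos by (simp add: val_divide val_mult val_power algebra_simps)
    consider "k < j" | "j < k" | "j = k" by linarith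
    then show ?thesis
    proof cases
      case 1
      then have "0 < v a" using val_a val_\<pi>_pos by simp
      then show ?thesis using zero by (intro bexI[of _ 0]) (auto simp: vanishes_at_def)
    next
      case 2
      then have "v a < 0" using val_a val_\<pi>_pos by (simp add: mult_neg_pos)
      then show ?thesis using a(2) False by (simp add: regular_at_def)
    next
      case 3
      then have "a = poly p x / poly r x" using a_eq val_\<pi>_pos by simp
      then show ?thesis using unit_quotient_congruent_reduced[OF p(1) r] by blast
    qed
  qed
qed

end

context place_regular_transcendental
begin

lemma finite_residue_reps_rat_fun_field: "\<exists>K. finite K \<and> residue_reps K (rat_fun_field Fq x)"
proof -
  let ?P = "\<lambda>p. poly_over Fq p \<and> p \<noteq> 0 \<and> vanishes_at v (poly p x)"
  obtain \<pi> where "?P \<pi>" "\<And>q. ?P q \<Longrightarrow> degree \<pi> \<le> degree q"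
    using ex_has_least_nat[of ?P _ degree] exists_poly_vanishing by blast
  then interpret prime_poly_at Fq v x B \<pi> by unfold_locales auto
  show ?thesis using finite_reduced_polys residue_reps_rat_fun_field by blast
qed

end

section \<open>Finiteness of the residue field\<close>

context place_valuation
begin

definition residue_independent :: "'k set \<Rightarrow> nat \<Rightarrow> (nat \<Rightarrow> 'k) \<Rightarrow> bool" where
  "residue_independent C m z \<longleftrightarrow>
     (\<forall>a. (\<forall>i<m. a i \<in> C) \<longrightarrow> vanishes_at v (\<Sum>i<m. a i * z i) \<longrightarrow> (\<forall>i<m. vanishes_at v (a i)))"

lemma residue_independentD:
  "residue_independent C m z \<Longrightarrow> \<forall>i<m. a i \<in> C \<Longrightarrow> vanishes_at v (\<Sum>i<m. a i * z i) \<Longrightarrow> i < m \<Longrightarrow>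
    vanishes_at v (a i)"
  by (simp add: residue_independent_def)

lemma residue_independent_extend:
  assumes C: "C \<subseteq> {z. regular_at v z}" "residue_reps K C"
    and closed: "\<And>a b. a \<in> C \<Longrightarrow> b \<in> C \<Longrightarrow> \<not> vanishes_at v a \<Longrightarrow> - (b / a) \<in> C"
    and z: "\<And>i. i < m \<Longrightarrow> regular_at v (z i)" "residue_independent C m z"
    and w: "regular_at v w"
    and w_new: "\<And>\<kappa>. \<forall>i<m. \<kappa> i \<in> K \<Longrightarrow> \<not> vanishes_at v (w - (\<Sum>i<m. \<kappa> i * z i))"
  shows "residue_independent C (Suc m) (z(m := w))"
  unfolding residue_independent_def
proof (rule allI, intro impI)
  fix a assume a: "\<forall>i<Suc m. a i \<in> C" and "vanishes_at v (\<Sum>i<Suc m. a i * (z(m := w)) i)"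
  then have van: "vanishes_at v ((\<Sum>i<m. a i * z i) + a m * w)"
    by (simp add: lessThan_Suc add.commute)
  have a_m: "vanishes_at v (a m)"
  proof (rule ccontr)
    assume nv: "\<not> vanishes_at v (a m)"
    have reg: "regular_at v (a m)" using a C(1) by auto
    \<comment> \<open>dividing by the unit \<open>a m\<close> expresses \<open>w\<close> through the \<open>z i\<close> with coefficients in \<open>C\<close>,
      which can be replaced by their representatives in \<open>K\<close>\<close>
    define b where "b i = - (a i / a m)" for i
    have "b i \<in> C" if "i < m" for i using closed a that nv by (simp add: b_def)
    then have "\<exists>k\<in>K. vanishes_at v (b i - k)" if "i < m" for i
      using C that unfolding residue_reps_def by blast
    then obtain \<kappa> where \<kappa>: "\<And>i. i < m \<Longrightarrow> \<kappa> i \<in> K \<and> vanishes_at v (b i - \<kappa> i)"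
      by metis
    have "(\<Sum>i<m. b i * z i) = - inverse (a m) * (\<Sum>i<m. a i * z i)"
      by (simp add: b_def sum_distrib_left sum_negf divide_inverse algebra_simps)
    moreover have "inverse (a m) * (a m * w) = w" using unit_at(1)[OF reg nv] by simp
    ultimately have "w - (\<Sum>i<m. \<kappa> i * z i)
        = inverse (a m) * ((\<Sum>i<m. a i * z i) + a m * w) + (\<Sum>i<m. (b i - \<kappa> i) * z i)"
      by (simp add: distrib_left left_diff_distrib sum_subtractf)
    moreover have "vanishes_at v (inverse (a m) * ((\<Sum>i<m. a i * z i) + a m * w))"
      using unit_at(3)[OF reg nv] van by (rule vanishes_at_mult_left)
    moreover have "vanishes_at v (\<Sum>i<m. (b i - \<kappa> i) * z i)"
      using \<kappa> z(1) by (intro vanishes_at_sum vanishes_at_mult_right) auto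
    ultimately have "vanishes_at v (w - (\<Sum>i<m. \<kappa> i * z i))" by (simp add: vanishes_at_add)
    then show False using w_new[of \<kappa>] \<kappa> by auto
  qed
  have "vanishes_at v ((\<Sum>i<m. a i * z i) + a m * w - a m * w)"
    using van vanishes_at_mult_right[OF a_m w] by (rule vanishes_at_diff)
  then have "\<forall>i<m. vanishes_at v (a i)"
    using z(2) a unfolding residue_independent_def by simp
  then show "\<forall>i<Suc m. vanishes_at v (a i)" using a_m less_Suc_eq by auto
qed

lemma residue_independent_length_le:
  assumes K0: "subfield K0" and B: "finite B" "spans K0 B"
    and z: "residue_independent {a \<in> K0. regular_at v a} m z"
  shows "m \<le> card B"
proof (rule ccontr)
  assume "\<not> m \<le> card B"
  then obtain \<mu> where \<mu>: "\<forall>i<m. \<mu> i \<in> K0" "\<exists>i<m. \<mu> i \<noteq> 0" "(\<Sum>i<m. \<mu> i * z i) = 0"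
    using spans_dependent[OF K0 B, of m z] by auto
  \<comment> \<open>normalise the relation by a coefficient of least valuation\<close>
  define S where "S = {i. i < m \<and> \<mu> i \<noteq> 0}"
  have "finite S" "S \<noteq> {}" using \<mu>(2) by (auto simp: S_def)
  then obtain j where j: "j \<in> S" "v (\<mu> j) = (MIN i\<in>S. v (\<mu> i))"
    using Min_in[of "(\<lambda>i. v (\<mu> i)) ` S"] by (metis (no_types, lifting) finite_imageI image_iff image_is_empty)
  have j_min: "v (\<mu> j) \<le> v (\<mu> i)" if "i \<in> S" for i using j that \<open>finite S\<close> by simp
  define a where "a i = \<mu> i / \<mu> j" for i
  have "a i \<in> K0 \<and> regular_at v (a i)" if "i < m" for i
  proof (cases "\<mu> i = 0")
    case False
    then have "i \<in> S" using that by (simp add: S_def)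
    then show ?thesis
      using j_min[of i] j \<mu>(1) False subfield_divide[OF K0]
      by (auto simp: a_def regular_at_def val_divide S_def)
  qed (simp add: a_def subfield_zero[OF K0])
  moreover have "(\<Sum>i<m. a i * z i) = (\<Sum>i<m. \<mu> i * z i) / \<mu> j"
    by (simp add: a_def sum_divide_distrib)
  ultimately have "vanishes_at v (a j)"
    using z \<mu>(3) j(1) unfolding residue_independent_def by (auto simp: S_def)
  then show False using j(1) by (simp add: a_def S_def)
qed

lemma residue_independent_exists:
  assumes C: "C \<subseteq> {z. regular_at v z}" "residue_reps K C" "finite K"
    and closed: "\<And>a b. a \<in> C \<Longrightarrow> b \<in> C \<Longrightarrow> \<not> vanishes_at v a \<Longrightarrow> - (b / a) \<in> C"
    and no_reps: "\<And>S. finite S \<Longrightarrow> \<not> residue_reps S UNIV"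
  shows "\<exists>z. (\<forall>i<m. regular_at v (z i)) \<and> residue_independent C m z"
proof (induction m)
  case 0
  then show ?case by (auto simp: residue_independent_def)
next
  case (Suc m)
  then obtain z where z: "\<forall>i<m. regular_at v (z i)" "residue_independent C m z" by blast
  define S where "S = (\<lambda>\<kappa>. \<Sum>i<m. \<kappa> i * z i) ` (\<Pi>\<^sub>E i\<in>{..<m}. K)"
  have "finite S" unfolding S_def using C(3) by (auto intro: finite_PiE)
  moreover have "S \<subseteq> {z. regular_at v z}"
  proof
    fix s assume "s \<in> S"
    then obtain \<kappa> where "\<kappa> \<in> (\<Pi>\<^sub>E i\<in>{..<m}. K)" "s = (\<Sum>i<m. \<kappa> i * z i)"
      unfolding S_def by blast
    then show "s \<in> {z. regular_at v z}"
      using C(2) z(1) unfolding residue_reps_def by (auto intro!: regular_at_sum regular_at_mult)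
  qed
  ultimately have "\<not> residue_reps S UNIV" using no_reps by blast
  then obtain w where w: "regular_at v w" "\<forall>s\<in>S. \<not> vanishes_at v (w - s)"
    using \<open>S \<subseteq> {z. regular_at v z}\<close> unfolding residue_reps_def by blast
  have "\<not> vanishes_at v (w - (\<Sum>i<m. \<kappa> i * z i))" if "\<forall>i<m. \<kappa> i \<in> K" for \<kappa>
  proof -
    have "(\<Sum>i<m. \<kappa> i * z i) \<in> S"
      unfolding S_def using that by (intro image_eqI[where x = "restrict \<kappa> {..<m}"]) auto
    then show ?thesis using w by blast
  qed
  then have "residue_independent C (Suc m) (z(m := w))"
    using residue_independent_extend[OF C(1,2) closed _ z(2) w(1)] z(1) by blast
  moreover have "\<forall>i<Suc m. regular_at v ((z(m := w)) i)" using z(1) w(1) by (auto simp: less_Suc_eq)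
  ultimately show ?case by blast
qed

text \<open>The residue field of \<open>K0\<close> is finite and \<open>'k\<close> is finite over \<open>K0\<close>, so the residue field
  of \<open>'k\<close> is finite: more than \<open>[k : K0]\<close> residually independent elements cannot exist.\<close>

lemma finite_residue_reps:
  assumes K0: "subfield K0" and B: "finite B" "spans K0 B"
    and K: "finite K" "residue_reps K K0"
  shows "\<exists>S. finite S \<and> residue_reps S UNIV"
proof (rule ccontr)
  assume no_reps: "\<not> ?thesis"
  let ?C = "{a \<in> K0. regular_at v a}"
  have closed: "- (b / a) \<in> ?C" if "a \<in> ?C" "b \<in> ?C" "\<not> vanishes_at v a" for a b
  proof -
    have "- (b / a) \<in> K0" using that by (auto intro: subfield_uminus[OF K0] subfield_divide[OF K0])
    moreover have "regular_at v (- (b / a))"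
      using that unit_at(3)[of a] unfolding divide_inverse by (auto intro: regular_at_uminus regular_at_mult)
    ultimately show ?thesis by simp
  qed
  have "residue_reps K ?C" using K(2) by (auto simp: residue_reps_def)
  then obtain z where "residue_independent ?C (Suc (card B)) z"
    using residue_independent_exists[of ?C K] K(1) closed no_reps by blast
  then show False using residue_independent_length_le[OF K0 B] by fastforce
qed

end

section \<open>Places of degree one\<close>

context place_valuation
begin

lemma residue_independent_const_eq:
  assumes z: "residue_independent Fq m z"
    and c: "c \<in> (\<Pi>\<^sub>E i\<in>{..<m}. Fq)" "c' \<in> (\<Pi>\<^sub>E i\<in>{..<m}. Fq)"
    and van: "vanishes_at v ((\<Sum>i<m. c i * z i) - (\<Sum>i<m. c' i * z i))"
  shows "c = c'"
proof -
  have "vanishes_at v (\<Sum>i<m. (c i - c' i) * z i)"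
    using van by (simp add: left_diff_distrib sum_subtractf)
  moreover have "\<forall>i<m. c i - c' i \<in> Fq" using c by (auto intro: subfield_diff[OF subfield])
  ultimately have "c i - c' i = 0" if "i < m" for i
    using residue_independentD[OF z, of "\<lambda>i. c i - c' i"] that const_vanishes_at_iff by simp
  then show "c = c'" using c by (intro PiE_ext[of c "{..<m}" "\<lambda>_. Fq"]) auto
qed

lemma regular_at_const_combination:
  "\<forall>i<m. regular_at v (z i) \<Longrightarrow> c \<in> (\<Pi>\<^sub>E i\<in>{..<m}. Fq) \<Longrightarrow> regular_at v (\<Sum>i<m. c i * z i)"
  by (intro regular_at_sum regular_at_mult) (auto simp: PiE_iff intro: regular_at_const)

lemma two_le_card_Fq: "finite Fq \<Longrightarrow> 2 \<le> card Fq"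
  using card_mono[of Fq "{0, 1}"] subfield_zero[OF subfield] subfield_one[OF subfield] by simp

lemma residue_independent_const_length_le:
  assumes Fq: "finite Fq" and S: "finite S" "residue_reps S UNIV"
    and z: "\<forall>i<m. regular_at v (z i)" "residue_independent Fq m z"
  shows "m \<le> card S"
proof -
  let ?E = "\<Pi>\<^sub>E i\<in>{..<m}. Fq"
  \<comment> \<open>the \<open>card Fq ^ m\<close> combinations of the \<open>z i\<close> lie in distinct residue classes\<close>
  have "\<exists>s\<in>S. vanishes_at v ((\<Sum>i<m. c i * z i) - s)" if "c \<in> ?E" for c
    using S(2) regular_at_const_combination[OF z(1) that] unfolding residue_reps_def by blast
  then obtain g where g: "\<And>c. c \<in> ?E \<Longrightarrow> g c \<in> S \<and> vanishes_at v ((\<Sum>i<m. c i * z i) - g c)"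
    by metis
  have "inj_on g ?E"
  proof (rule inj_onI)
    fix c c' assume c: "c \<in> ?E" "c' \<in> ?E" "g c = g c'"
    have "vanishes_at v (((\<Sum>i<m. c i * z i) - g c) - ((\<Sum>i<m. c' i * z i) - g c'))"
      using g[OF c(1)] g[OF c(2)] by (blast intro: vanishes_at_diff)
    then show "c = c'"
      using residue_independent_const_eq[OF z(2) c(1,2)] c(3) by simp
  qed
  moreover have "g ` ?E \<subseteq> S" using g by auto
  ultimately have "card ?E \<le> card S" using S(1) by (intro card_inj_on_le) auto
  then have "card Fq ^ m \<le> card S" by (simp add: card_PiE)
  moreover have "m < 2 ^ m" by (rule less_exp)
  moreover have "(2::nat) ^ m \<le> card Fq ^ m" using two_le_card_Fq[OF Fq] by (rule power_mono) simp
  ultimately show ?thesis by linarith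
qed

definition residue_rel :: "('k \<times> 'k) set" where
  "residue_rel = {(x, y). regular_at v x \<and> regular_at v y \<and> vanishes_at v (x - y)}"

lemma residue_field_eq_quotient: "residue_field v = {x. regular_at v x} // residue_rel"
  unfolding residue_field_def residue_rel_def ..

lemma equiv_residue_rel: "equiv {x. regular_at v x} residue_rel"
proof (rule equivI)
  show "refl_on {x. regular_at v x} residue_rel" by (auto simp: refl_on_def residue_rel_def)
  show "residue_rel \<subseteq> {x. regular_at v x} \<times> {x. regular_at v x}" by (auto simp: residue_rel_def)
  show "sym residue_rel" by (auto simp: sym_def residue_rel_def dest: vanishes_at_uminus)
  show "trans residue_rel" by (auto simp: trans_def residue_rel_def intro: vanishes_at_diff_trans)
qed

lemma bij_betw_residue_classes:
  assumes z: "\<forall>i<m. regular_at v (z i)" "residue_independent Fq m z"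
    and spanning: "\<And>w. regular_at v w \<Longrightarrow>
      \<exists>c\<in>(\<Pi>\<^sub>E i\<in>{..<m}. Fq). vanishes_at v (w - (\<Sum>i<m. c i * z i))"
  shows "bij_betw (\<lambda>c. residue_rel `` {\<Sum>i<m. c i * z i}) (\<Pi>\<^sub>E i\<in>{..<m}. Fq) (residue_field v)"
  unfolding residue_field_eq_quotient
proof (rule bij_betw_imageI)
  let ?E = "\<Pi>\<^sub>E i\<in>{..<m}. Fq" and ?class = "\<lambda>c. residue_rel `` {\<Sum>i<m. c i * z i}"
  note class_eq_iff = equiv_class_eq_iff[OF equiv_residue_rel]
  show "inj_on ?class ?E"
  proof (rule inj_onI)
    fix c c' assume c: "c \<in> ?E" "c' \<in> ?E" "?class c = ?class c'"
    then have "((\<Sum>i<m. c i * z i), (\<Sum>i<m. c' i * z i)) \<in> residue_rel"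
      using class_eq_iff regular_at_const_combination[OF z(1)] by auto
    then show "c = c'"
      using residue_independent_const_eq[OF z(2) c(1,2)] by (simp add: residue_rel_def)
  qed
  show "?class ` ?E = {x. regular_at v x} // residue_rel"
  proof
    show "?class ` ?E \<subseteq> {x. regular_at v x} // residue_rel"
      using regular_at_const_combination[OF z(1)] by (auto intro: quotientI)
    show "{x. regular_at v x} // residue_rel \<subseteq> ?class ` ?E"
    proof
      fix X assume "X \<in> {x. regular_at v x} // residue_rel"
      then obtain w where w: "regular_at v w" "X = residue_rel `` {w}" by (auto elim: quotientE)
      obtain c where c: "c \<in> ?E" "vanishes_at v (w - (\<Sum>i<m. c i * z i))"
        using spanning[OF w(1)] by blast
      then have "(w, \<Sum>i<m. c i * z i) \<in> residue_rel"
        using w(1) regular_at_const_combination[OF z(1)] by (simp add: residue_rel_def)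
      then have "X = ?class c" using w(2) class_eq_iff by simp
      then show "X \<in> ?class ` ?E" using c(1) by blast
    qed
  qed
qed

lemma card_residue_field_eq_power:
  assumes "\<forall>i<m. regular_at v (z i)" "residue_independent Fq m z"
    and "\<And>w. regular_at v w \<Longrightarrow>
      \<exists>c\<in>(\<Pi>\<^sub>E i\<in>{..<m}. Fq). vanishes_at v (w - (\<Sum>i<m. c i * z i))"
  shows "card (residue_field v) = card Fq ^ m"
  using bij_betw_same_card[OF bij_betw_residue_classes[OF assms]] by (simp add: card_PiE)

lemma place_deg_eq:
  assumes "card (residue_field v) = card Fq ^ n" "2 \<le> card Fq"
  shows "place_deg Fq v = n"
  unfolding place_deg_def using assms by (intro the_equality) (simp_all add: power_inject_exp)

lemma residue_independent_one_nonconst: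
  assumes z: "\<forall>c\<in>Fq. \<not> vanishes_at v (z - c)"
  shows "residue_independent Fq 2 (\<lambda>i. if i = 0 then 1 else z)"
  unfolding residue_independent_def
proof (intro allI impI)
  fix c :: "nat \<Rightarrow> 'k" and i :: nat
  assume c: "\<forall>i<2. c i \<in> Fq" and van: "vanishes_at v (\<Sum>i<2. c i * (if i = 0 then 1 else z))"
    and "i < 2"
  then have van: "vanishes_at v (c 0 + c 1 * z)" and "c 0 \<in> Fq" "c 1 \<in> Fq"
    by (simp_all add: numeral_2_eq_2)
  have "c 1 = 0"
  proof (rule ccontr)
    assume "c 1 \<noteq> 0"
    then have "z - (- (c 0 / c 1)) = inverse (c 1) * (c 0 + c 1 * z)" by (simp add: field_simps)
    moreover have "regular_at v (inverse (c 1))"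
      using regular_at_const subfield_inverse[OF subfield \<open>c 1 \<in> Fq\<close>] by simp
    ultimately have "vanishes_at v (z - (- (c 0 / c 1)))"
      using van by (simp add: vanishes_at_mult_left)
    moreover have "- (c 0 / c 1) \<in> Fq"
      using \<open>c 0 \<in> Fq\<close> \<open>c 1 \<in> Fq\<close> by (intro subfield_uminus[OF subfield] subfield_divide[OF subfield])
    ultimately show False using z by blast
  qed
  then have "c 0 = 0" using van const_vanishes_at_iff \<open>c 0 \<in> Fq\<close> by simp
  then show "vanishes_at v (c i)" using \<open>c 1 = 0\<close> \<open>i < 2\<close> by (auto simp: less_2_cases_iff)
qed

lemma residue_independent_const_extend:
  assumes zs: "\<forall>i<m. regular_at v (zs i)" "residue_independent Fq m zs" and w: "regular_at v w"
    and w_new: "\<forall>c\<in>(\<Pi>\<^sub>E i\<in>{..<m}. Fq). \<not> vanishes_at v (w - (\<Sum>i<m. c i * zs i))"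
  shows "residue_independent Fq (Suc m) (zs(m := w))"
proof (rule residue_independent_extend[OF _ _ _ _ zs(2) w])
  show Fq_regular: "Fq \<subseteq> {z. regular_at v z}" using regular_at_const by blast
  then show "residue_reps Fq Fq" unfolding residue_reps_def by force
  show "- (b / a) \<in> Fq" if "a \<in> Fq" "b \<in> Fq" for a b
    using that by (intro subfield_uminus[OF subfield] subfield_divide[OF subfield])
  show "regular_at v (zs i)" if "i < m" for i using zs(1) that by blast
  show "\<not> vanishes_at v (w - (\<Sum>i<m. \<kappa> i * zs i))" if "\<forall>i<m. \<kappa> i \<in> Fq" for \<kappa>
  proof -
    have "restrict \<kappa> {..<m} \<in> (\<Pi>\<^sub>E i\<in>{..<m}. Fq)" using that by simp
    then have "\<not> vanishes_at v (w - (\<Sum>i<m. restrict \<kappa> {..<m} i * zs i))" using w_new by blast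
    then show ?thesis by simp
  qed
qed

text \<open>A maximal family of residually independent elements over \<open>Fq\<close> is a basis of the residue
  field, whose cardinality therefore is \<open>card Fq\<close> raised to the length of the family. For a place of
  degree one that length is \<open>1\<close>, while \<open>1, z\<close> would be independent for a non-constant residue \<open>z\<close>.\<close>

lemma degree_one_residue_const:
  assumes Fq: "finite Fq" and S: "finite S" "residue_reps S UNIV"
    and deg: "place_deg Fq v = 1" and z: "regular_at v z"
  shows "\<exists>c\<in>Fq. vanishes_at v (z - c)"
proof (rule ccontr)
  assume nonconst: "\<not> ?thesis"
  let ?P = "\<lambda>m. \<exists>z. (\<forall>i<m. regular_at v (z i)) \<and> residue_independent Fq m z"
  have bound: "\<And>m. ?P m \<Longrightarrow> m \<le> card S"
    using residue_independent_const_length_le[OF Fq S] by blast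
  have "?P 2"
    using residue_independent_one_nonconst nonconst z
    by (intro exI[of _ "\<lambda>i. if i = 0 then 1 else z"]) (auto simp: regular_at_def)
  define m where "m = (GREATEST m. ?P m)"
  have "?P m" unfolding m_def by (rule GreatestI_nat[of ?P 2 "card S", OF \<open>?P 2\<close> bound])
  have "2 \<le> m" unfolding m_def by (rule Greatest_le_nat[of ?P 2 "card S", OF \<open>?P 2\<close> bound])
  from \<open>?P m\<close> obtain zs where zs: "\<forall>i<m. regular_at v (zs i)" "residue_independent Fq m zs" by blast
  have "\<exists>c\<in>(\<Pi>\<^sub>E i\<in>{..<m}. Fq). vanishes_at v (w - (\<Sum>i<m. c i * zs i))" if w: "regular_at v w" for w
  proof (rule ccontr)
    assume "\<not> ?thesis"
    then have "residue_independent Fq (Suc m) (zs(m := w))"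
      using residue_independent_const_extend[OF zs w] by blast
    moreover have "\<forall>i<Suc m. regular_at v ((zs(m := w)) i)" using zs(1) w by (auto simp: less_Suc_eq)
    ultimately have "?P (Suc m)" by blast
    then have "Suc m \<le> m" unfolding m_def using bound by (rule Greatest_le_nat[of ?P _ "card S"])
    then show False by simp
  qed
  then have "card (residue_field v) = card Fq ^ m" by (rule card_residue_field_eq_power[OF zs])
  then have "place_deg Fq v = m" using place_deg_eq two_le_card_Fq[OF Fq] by blast
  then show False using deg \<open>2 \<le> m\<close> by simp
qed

end

section \<open>Evaluation at rational places\<close>

lemma (in place_valuation) exists_regular_transcendental:
  assumes "function_field Fq"
  obtains x B where "place_regular_transcendental Fq v x B"
proof -
  obtain x B where x: "\<not> algebraic_over Fq x" and B: "finite B" "spans (rat_fun_field Fq x) B"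
    using assms unfolding function_field_def spans_def by blast
  have Fq: "finite Fq" "\<And>y. algebraic_over Fq y \<Longrightarrow> y \<in> Fq"
    using assms by (auto simp: function_field_def)
  have intro: "place_regular_transcendental Fq v y B"
    if "\<not> algebraic_over Fq y" "regular_at v y" "spans (rat_fun_field Fq y) B" for y
    using that B(1) Fq(1) place_valuation_axioms
    by (simp add: place_regular_transcendental_def place_regular_transcendental_axioms_def)
  show ?thesis
  proof (cases "regular_at v x")
    case True
    then show ?thesis using that intro x B by blast
  next
    case False
    have "x \<noteq> 0" using x algebraic_over_of_mem[OF subfield subfield_zero[OF subfield]] by auto
    have "\<not> algebraic_over Fq (inverse x)"
    proof
      assume "algebraic_over Fq (inverse x)"
      then have "x \<in> Fq" using Fq(2) subfield_inverse[OF subfield, of "inverse x"] by simp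
      then show False using x algebraic_over_of_mem[OF subfield] by blast
    qed
    moreover have "regular_at v (inverse x)"
      using False by (auto simp: regular_at_def val_inverse)
    moreover have "spans (rat_fun_field Fq (inverse x)) B"
      using B(2) rat_fun_field_subset_inverse[OF subfield \<open>x \<noteq> 0\<close>] unfolding spans_def by blast
    ultimately show ?thesis using that intro by blast
  qed
qed

lemma rational_place_residue_const:
  assumes ff: "function_field Fq" and P: "P \<in> rational_places Fq" and z: "regular_at P z"
  shows "\<exists>c\<in>Fq. vanishes_at P (z - c)"
proof -
  interpret place_valuation Fq P
    using ff P by unfold_locales (auto simp: function_field_def rational_places_def places_def)
  obtain x B where "place_regular_transcendental Fq P x B"
    using exists_regular_transcendental[OF ff] .
  then interpret place_regular_transcendental Fq P x B .
  obtain K where "finite K" "residue_reps K (rat_fun_field Fq x)"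
    using finite_residue_reps_rat_fun_field by blast
  then obtain S where "finite S" "residue_reps S UNIV"
    using finite_residue_reps[OF subfield_rat_fun_field[OF subfield] finite_B spans_B] by blast
  then show ?thesis
    using degree_one_residue_const[OF finite_Fq _ _ _ z] P by (simp add: rational_places_def)
qed

lemma eval_at_vanishes:
  assumes "function_field Fq" "P \<in> rational_places Fq" "regular_at P z"
  shows "eval_at Fq P z \<in> Fq" "vanishes_at P (z - eval_at Fq P z)"
  using someI_ex[OF rational_place_residue_const[OF assms, unfolded Bex_def]]
  unfolding eval_at_def by simp_all

lemma eval_at_eq_imp_vanishes:
  assumes ff: "function_field Fq" and P: "P \<in> rational_places Fq"
    and regular: "regular_at P a" "regular_at P b" and eq: "eval_at Fq P a = eval_at Fq P b"
  shows "vanishes_at P (a - b)"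
proof -
  interpret place_valuation Fq P
    using ff P by unfold_locales (auto simp: function_field_def rational_places_def places_def)
  have "vanishes_at P ((a - eval_at Fq P a) - (b - eval_at Fq P b))"
    using eval_at_vanishes[OF ff P regular(1)] eval_at_vanishes[OF ff P regular(2)]
    by (blast intro: vanishes_at_diff)
  then show ?thesis using eq by simp
qed

section \<open>Riemann--Roch spaces and algebraic geometry codes\<close>

lemma val_ge_of_RR_space:
  assumes "f \<in> RR_space Fq E" "f \<noteq> 0" "place Fq v"
  shows "- E v \<le> v f"
  using assms by (auto simp: RR_space_def principal_div_def dest: spec[of _ v])

lemma regular_at_of_RR_space:
  "f \<in> RR_space Fq E \<Longrightarrow> place Fq v \<Longrightarrow> E v \<le> 0 \<Longrightarrow> regular_at v f"
  using val_ge_of_RR_space[of f Fq E v] by (cases "f = 0") (auto simp: regular_at_def)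

lemma RR_space_uminus:
  assumes "subfield Fq" "f \<in> RR_space Fq E"
  shows "- f \<in> RR_space Fq E"
proof -
  have "principal_div Fq (- f) = principal_div Fq f"
  proof
    fix v show "principal_div Fq (- f) v = principal_div Fq f v"
      using place_valuation.val_uminus[of Fq v] assms(1)
      by (auto simp: principal_div_def place_valuation_def)
  qed
  then show ?thesis using assms(2) by (simp add: RR_space_def)
qed

lemma RR_space_div_gcd: "RR_space Fq (div_gcd E F) = RR_space Fq E \<inter> RR_space Fq F"
proof -
  have "0 \<le> d + min e f \<longleftrightarrow> 0 \<le> d + e \<and> 0 \<le> d + f" for d e f :: int by linarith
  then show ?thesis by (auto simp: RR_space_def div_gcd_def all_conj_distrib)
qed

lemma AG_code_div_gcd_subset:
  "AG_code Fq Pset (div_gcd E F) \<subseteq> AG_code Fq Pset E \<inter> AG_code Fq Pset F"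
  unfolding AG_code_def RR_space_div_gcd by blast

lemma (in place_valuation) val_diff_ge_of_RR_space:
  assumes a: "a \<in> RR_space Fq E" and b: "b \<in> RR_space Fq F" and "a - b \<noteq> 0"
  shows "- div_lcm E F v \<le> v (a - b)"
proof (cases "a = 0 \<or> b = 0")
  case True
  then show ?thesis
    using val_ge_of_RR_space[OF a _ place] val_ge_of_RR_space[OF b _ place] \<open>a - b \<noteq> 0\<close>
    by (auto simp: div_lcm_def)
next
  case False
  then show ?thesis
    using val_add_ge_min[of a "- b"] \<open>a - b \<noteq> 0\<close> val_ge_of_RR_space[OF a _ place]
      val_ge_of_RR_space[OF b _ place] by (auto simp: div_lcm_def)
qed

lemma diff_in_RR_space_lcm_minus_sum_div:
  assumes subfield: "subfield Fq" and Pset: "Pset \<subseteq> places Fq"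
    and a: "a \<in> RR_space Fq E" and b: "b \<in> RR_space Fq F"
    and lcm_nonneg: "\<And>v. \<not> place Fq v \<or> v \<in> Pset \<Longrightarrow> 0 \<le> div_lcm E F v"
    and vanishes: "\<And>P. P \<in> Pset \<Longrightarrow> vanishes_at P (a - b)"
  shows "a - b \<in> RR_space Fq (\<lambda>v. div_lcm E F v - sum_div Pset v)"
proof (cases "a - b = 0")
  case False
  have "0 \<le> principal_div Fq (a - b) v + (div_lcm E F v - sum_div Pset v)" for v
  proof (cases "place Fq v")
    case False
    then show ?thesis using lcm_nonneg[of v] Pset by (auto simp: principal_div_def sum_div_def places_def)
  next
    case True
    interpret place_valuation Fq v using subfield True by unfold_locales
    show ?thesis
    proof (cases "v \<in> Pset")
      case True
      then show ?thesis
        using vanishes[of v] lcm_nonneg[of v] \<open>a - b \<noteq> 0\<close> place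
        by (simp add: vanishes_at_def principal_div_def sum_div_def)
    next
      case False
      then show ?thesis using val_diff_ge_of_RR_space[OF a b \<open>a - b \<noteq> 0\<close>] place
        by (simp add: principal_div_def sum_div_def)
    qed
  qed
  then show ?thesis by (simp add: RR_space_def)
qed (simp add: RR_space_def)

theorem AG_code_Int_eq_div_gcd:
  assumes ff: "function_field Fq" and Pset: "Pset \<subseteq> rational_places Fq"
    and off_places: "\<And>v. \<not> place Fq v \<Longrightarrow> E v = 0 \<and> F v = 0"
    and on_Pset: "\<And>P. P \<in> Pset \<Longrightarrow> div_lcm E F P = 0"
    and trivial: "RR_space Fq (\<lambda>v. div_lcm E F v - sum_div Pset v)
       \<inter> {a + b | a b. a \<in> RR_space Fq E \<and> b \<in> RR_space Fq F} = {0}"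
  shows "AG_code Fq Pset E \<inter> AG_code Fq Pset F = AG_code Fq Pset (div_gcd E F)"
proof
  show "AG_code Fq Pset (div_gcd E F) \<subseteq> AG_code Fq Pset E \<inter> AG_code Fq Pset F"
    by (rule AG_code_div_gcd_subset)
next
  have subfield_Fq: "subfield Fq" using ff by (simp add: function_field_def)
  have places: "Pset \<subseteq> places Fq" and place: "\<And>P. P \<in> Pset \<Longrightarrow> place Fq P"
    using Pset by (auto simp: rational_places_def places_def)
  show "AG_code Fq Pset E \<inter> AG_code Fq Pset F \<subseteq> AG_code Fq Pset (div_gcd E F)"
  proof
    fix u assume "u \<in> AG_code Fq Pset E \<inter> AG_code Fq Pset F"
    then obtain a b where a: "a \<in> RR_space Fq E" "u = (\<lambda>P. if P \<in> Pset then eval_at Fq P a else 0)"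
      and b: "b \<in> RR_space Fq F" "u = (\<lambda>P. if P \<in> Pset then eval_at Fq P b else 0)"
      unfolding AG_code_def by blast
    have "vanishes_at P (a - b)" if "P \<in> Pset" for P
    proof (rule eval_at_eq_imp_vanishes[OF ff])
      show "P \<in> rational_places Fq" using that Pset by blast
      show "regular_at P a" "regular_at P b"
        using regular_at_of_RR_space[OF a(1) place[OF that]] regular_at_of_RR_space[OF b(1) place[OF that]]
          on_Pset[OF that] by (auto simp: div_lcm_def)
      show "eval_at Fq P a = eval_at Fq P b" using fun_cong[of _ _ P, OF trans[OF a(2)[symmetric] b(2)]] that
        by simp
    qed
    moreover have "0 \<le> div_lcm E F v" if "\<not> place Fq v \<or> v \<in> Pset" for v
      using that off_places[of v] on_Pset[of v] by (auto simp: div_lcm_def)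
    ultimately have "a - b \<in> RR_space Fq (\<lambda>v. div_lcm E F v - sum_div Pset v)"
      using diff_in_RR_space_lcm_minus_sum_div[OF subfield_Fq places a(1) b(1)] by blast
    moreover have "a - b = a + (- b)" by simp
    then have "a - b \<in> {a + b | a b. a \<in> RR_space Fq E \<and> b \<in> RR_space Fq F}"
      using a(1) RR_space_uminus[OF subfield_Fq b(1)] by blast
    ultimately have "a - b \<in> {0}" unfolding trivial[symmetric] by (rule IntI)
    then have "a = b" by simp
    then show "u \<in> AG_code Fq Pset (div_gcd E F)"
      using a b unfolding AG_code_def RR_space_div_gcd by blast
  qed
qed

theorem proposition4p5:
  fixes Fq :: "'k::field set" and Pset :: "('k \<Rightarrow> int) set"
    and G H J :: "'k divisor"
  assumes ff: "function_field Fq"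
    and P_proper: "Pset \<subset> rational_places Fq"
    and divs: "is_divisor Fq G" "is_divisor Fq H" "is_divisor Fq J"
    and degs: "div_deg Fq G \<le> div_deg Fq (sum_div Pset) - 1"
              "div_deg Fq H \<le> div_deg Fq (sum_div Pset) - 1"
              "div_deg Fq J \<le> div_deg Fq (sum_div Pset) - 1"
    and disj: "(div_supp G \<union> div_supp H \<union> div_supp J) \<inter> div_supp (sum_div Pset) = {}"
    and hyp: "\<forall>f \<in> RR_space Fq J - {0}.
       RR_space Fq (\<lambda>v. div_lcm G (\<lambda>w. H w - principal_div Fq f w) v - sum_div Pset v)
       \<inter> {a + b | a b. a \<in> RR_space Fq G \<and> b \<in> RR_space Fq (\<lambda>w. H w - principal_div Fq f w)}
       = {0}"
  shows "\<forall>f \<in> RR_space Fq J - {0}.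
       AG_code Fq Pset G \<inter> AG_code Fq Pset (\<lambda>w. H w - principal_div Fq f w)
       = AG_code Fq Pset (div_gcd G (\<lambda>w. H w - principal_div Fq f w))"
proof
  fix f assume f: "f \<in> RR_space Fq J - {0}"
  have Pset: "Pset \<subseteq> rational_places Fq" using P_proper by blast
  have zero_on_Pset: "G P = 0" "H P = 0" "J P = 0" if "P \<in> Pset" for P
    using disj that by (auto simp: div_supp_def sum_div_def)
  show "AG_code Fq Pset G \<inter> AG_code Fq Pset (\<lambda>w. H w - principal_div Fq f w)
      = AG_code Fq Pset (div_gcd G (\<lambda>w. H w - principal_div Fq f w))"
  proof (rule AG_code_Int_eq_div_gcd[OF ff Pset])
    show "G v = 0 \<and> H v - principal_div Fq f v = 0" if "\<not> place Fq v" for v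
      using divs that by (auto simp: is_divisor_def places_def principal_div_def)
    show "div_lcm G (\<lambda>w. H w - principal_div Fq f w) P = 0" if "P \<in> Pset" for P
    proof -
      have "place Fq P" using that Pset by (auto simp: rational_places_def places_def)
      then have "0 \<le> P f" using val_ge_of_RR_space[of f Fq J P] f zero_on_Pset[OF that] by auto
      then show ?thesis using zero_on_Pset[OF that] \<open>place Fq P\<close> by (simp add: div_lcm_def principal_div_def)
    qed
  qed (use hyp f in blast)
qed

end
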